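(* Let $P$ be a finite poset (hence a DCPO) and $\theta$ an equivalence relation on $P$. Then $\theta$ is a natural DCPO congruence if and only if $\theta$ is a compatible congruence.
   Context: A subset $D$ of a poset is directed if every finite subset of $D$ has an upper bound in $D$ (in particular $D$ is nonempty). A poset is a DCPO (directed complete partial order) if every directed subset has a join. A map $\phi\colon P\to Q$ between DCPOs is a DCPO map if for every directed $D\subseteq P$, $\phi(D)$ is directed and $\phi(\bigvee D)=\bigvee\phi(D)$. For an equivalence relation $\theta$ with classes $[p]$, the quotient relation is $[p]\leqslant_\theta[q]$ iff there exist $p'\in[p]$, $q'\in[q]$ with $p'\leqslant q'$; $\theta$ is a natural DCPO congruence if the transitive closure of $\leqslant_\theta$ is a partial order on $P/\theta$ making it a DCPO and the canonical map $P\to P/\theta$ is a DCPO map. A $\theta$-circle is a sequence $(p_0,\dots,p_n)$ with $p_0=p_n$ and for each $i$ either $p_{i-1}\,\theta\,p_i$ or $p_{i-1}<p_i$; $\theta$ is a compatible congruence if every $\theta$-circle lies within one equivalence class. *)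

theory Defs
  imports Main
begin

definition directed :: "'a set \<Rightarrow> ('a \<times> 'a) set \<Rightarrow> 'a set \<Rightarrow> bool" where
  "directed A r D \<longleftrightarrow> D \<subseteq> A \<and>
     (\<forall>F. finite F \<and> F \<subseteq> D \<longrightarrow> (\<exists>u\<in>D. \<forall>x\<in>F. (x, u) \<in> r))"

definition is_join :: "'a set \<Rightarrow> ('a \<times> 'a) set \<Rightarrow> 'a set \<Rightarrow> 'a \<Rightarrow> bool" where
  "is_join A r D s \<longleftrightarrow> s \<in> A \<and> (\<forall>x\<in>D. (x, s) \<in> r) \<and>
     (\<forall>u\<in>A. (\<forall>x\<in>D. (x, u) \<in> r) \<longrightarrow> (s, u) \<in> r)"

definition dcpo :: "'a set \<Rightarrow> ('a \<times> 'a) set \<Rightarrow> bool" where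
  "dcpo A r \<longleftrightarrow> partial_order_on A r \<and> (\<forall>D. directed A r D \<longrightarrow> (\<exists>s. is_join A r D s))"

definition dcpo_map ::
  "'a set \<Rightarrow> ('a \<times> 'a) set \<Rightarrow> 'b set \<Rightarrow> ('b \<times> 'b) set \<Rightarrow> ('a \<Rightarrow> 'b) \<Rightarrow> bool" where
  "dcpo_map A r B s \<phi> \<longleftrightarrow> \<phi> ` A \<subseteq> B \<and>
     (\<forall>D x. directed A r D \<and> is_join A r D x \<longrightarrow>
        directed B s (\<phi> ` D) \<and> is_join B s (\<phi> ` D) (\<phi> x))"

definition quot_rel :: "'a set \<Rightarrow> ('a \<times> 'a) set \<Rightarrow> ('a \<times> 'a) set \<Rightarrow> ('a set \<times> 'a set) set" where
  "quot_rel A r \<theta> = {(X, Y). X \<in> A // \<theta> \<and> Y \<in> A // \<theta> \<and> (\<exists>p\<in>X. \<exists>q\<in>Y. (p, q) \<in> r)}"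

definition natural_dcpo_congruence :: "'a set \<Rightarrow> ('a \<times> 'a) set \<Rightarrow> ('a \<times> 'a) set \<Rightarrow> bool" where
  "natural_dcpo_congruence A r \<theta> \<longleftrightarrow>
     partial_order_on (A // \<theta>) ((quot_rel A r \<theta>)\<^sup>+) \<and>
     dcpo (A // \<theta>) ((quot_rel A r \<theta>)\<^sup>+) \<and>
     dcpo_map A r (A // \<theta>) ((quot_rel A r \<theta>)\<^sup>+) (\<lambda>p. \<theta> `` {p})"

definition theta_circle :: "'a set \<Rightarrow> ('a \<times> 'a) set \<Rightarrow> ('a \<times> 'a) set \<Rightarrow> (nat \<Rightarrow> 'a) \<Rightarrow> nat \<Rightarrow> bool" where
  "theta_circle A r \<theta> p n \<longleftrightarrow> (\<forall>i\<le>n. p i \<in> A) \<and> p 0 = p n \<and>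
     (\<forall>i\<in>{1..n}. (p (i - 1), p i) \<in> \<theta> \<or> ((p (i - 1), p i) \<in> r \<and> p (i - 1) \<noteq> p i))"

definition compatible_congruence :: "'a set \<Rightarrow> ('a \<times> 'a) set \<Rightarrow> ('a \<times> 'a) set \<Rightarrow> bool" where
  "compatible_congruence A r \<theta> \<longleftrightarrow>
     (\<forall>p n. theta_circle A r \<theta> p n \<longrightarrow> (\<forall>i\<le>n. (p 0, p i) \<in> \<theta>))"

end

theory Submission
  imports Defs
begin

text \<open>Both conditions say that elements joined in both directions by chains of \<open>\<theta>\<close>-steps and
  order steps are \<open>\<theta>\<close>-equivalent. For a \<open>\<theta>\<close>-circle this is immediate; for the quotient, a chain
  of blocks related by the quotient relation lifts to such a chain of elements and conversely, so
  the condition is exactly antisymmetry of the transitive closure of the quotient relation. That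
  closure is always reflexive and transitive, and since everything is finite, directed sets have
  greatest elements: a finite poset is a DCPO and every monotone map between finite posets is a
  DCPO map.\<close>

lemma directed_finite_has_greatest:
  assumes "finite A" "directed A r D"
  shows "\<exists>m\<in>D. \<forall>x\<in>D. (x, m) \<in> r"
proof -
  have "finite D"
    using assms finite_subset unfolding directed_def by blast
  then show ?thesis
    using assms(2) unfolding directed_def by blast
qed

lemma finite_partial_order_dcpo:
  assumes "finite A" "partial_order_on A r"
  shows "dcpo A r"
  unfolding dcpo_def
proof (intro conjI allI impI)
  fix D assume D: "directed A r D"
  then obtain m where "m \<in> D" "\<forall>x\<in>D. (x, m) \<in> r"
    using directed_finite_has_greatest assms(1) by blast
  moreover have "m \<in> A"
    using \<open>m \<in> D\<close> D unfolding directed_def by blast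
  ultimately show "\<exists>s. is_join A r D s"
    unfolding is_join_def by blast
qed fact

lemma finite_monotone_dcpo_map:
  assumes "finite A" "partial_order_on A r" "\<phi> ` A \<subseteq> B"
    and mono: "\<And>x y. (x, y) \<in> r \<Longrightarrow> (\<phi> x, \<phi> y) \<in> s"
  shows "dcpo_map A r B s \<phi>"
  unfolding dcpo_map_def
proof (intro conjI allI impI)
  fix D x assume Dx: "directed A r D \<and> is_join A r D x"
  then obtain m where m: "m \<in> D" "\<forall>x\<in>D. (x, m) \<in> r"
    using directed_finite_has_greatest assms(1) by blast
  have "D \<subseteq> A"
    using Dx unfolding directed_def by blast
  then have "(x, m) \<in> r" "(m, x) \<in> r"
    using Dx m unfolding is_join_def by blast+
  then have "x = m"
    using assms(2) unfolding partial_order_on_def antisym_def by blast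
  have ub: "\<forall>y\<in>\<phi> ` D. (y, \<phi> m) \<in> s"
    using m mono by blast
  show "directed B s (\<phi> ` D)"
    unfolding directed_def using ub m \<open>D \<subseteq> A\<close> assms(3) by blast
  show "is_join B s (\<phi> ` D) (\<phi> x)"
    unfolding is_join_def \<open>x = m\<close> using ub m \<open>D \<subseteq> A\<close> assms(3) by blast
qed fact

definition cycle_closed :: "'a set \<Rightarrow> ('a \<times> 'a) set \<Rightarrow> ('a \<times> 'a) set \<Rightarrow> bool" where
  "cycle_closed A r \<theta> \<longleftrightarrow>
    (\<forall>a\<in>A. \<forall>b\<in>A. (a, b) \<in> (\<theta> \<union> r)\<^sup>* \<and> (b, a) \<in> (\<theta> \<union> r)\<^sup>* \<longrightarrow> (a, b) \<in> \<theta>)"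

lemma rtrancl_cycle_through:
  assumes "(a, b) \<in> E\<^sup>*" "(b, a) \<in> E\<^sup>*"
  obtains p n k where "p 0 = a" "p n = a" "k \<le> n" "p k = b" "\<forall>i<n. (p i, p (Suc i)) \<in> E"
proof -
  obtain f n where f: "f 0 = a" "f n = b" "\<forall>i<n. (f i, f (Suc i)) \<in> E"
    using assms(1) rtrancl_power relpow_fun_conv by metis
  obtain g m where g: "g 0 = b" "g m = a" "\<forall>i<m. (g i, g (Suc i)) \<in> E"
    using assms(2) rtrancl_power relpow_fun_conv by metis
  let ?p = "\<lambda>i. if i \<le> n then f i else g (i - n)"
  have "(?p i, ?p (Suc i)) \<in> E" if "i < n + m" for i
  proof (cases "i < n")
    case False
    then have "Suc i - n = Suc (i - n)" "i - n < m"
      using that by auto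
    then show ?thesis
      using False f g by (cases "i = n") auto
  qed (use f in auto)
  moreover have "?p (n + m) = a"
    using f g by (cases "m = 0") auto
  ultimately show thesis
    using f g by (intro that[of ?p "n + m" n]) auto
qed

lemma theta_circle_iff_path:
  assumes "equiv A \<theta>" "r \<subseteq> A \<times> A" "p 0 \<in> A"
  shows "theta_circle A r \<theta> p n \<longleftrightarrow> p n = p 0 \<and> (\<forall>i<n. (p i, p (Suc i)) \<in> \<theta> \<union> r)"
proof
  assume "theta_circle A r \<theta> p n"
  moreover have "(p (Suc i - 1), p (Suc i)) \<in> \<theta> \<union> r"
    if "theta_circle A r \<theta> p n" "i < n" for i
    using that unfolding theta_circle_def by fastforce
  ultimately show "p n = p 0 \<and> (\<forall>i<n. (p i, p (Suc i)) \<in> \<theta> \<union> r)"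
    unfolding theta_circle_def by auto
next
  assume path: "p n = p 0 \<and> (\<forall>i<n. (p i, p (Suc i)) \<in> \<theta> \<union> r)"
  have "\<theta> \<union> r \<subseteq> A \<times> A"
    using assms(1,2) unfolding equiv_def refl_on_def by blast
  then have inA: "p i \<in> A" if "i \<le> n" for i
    using that
  proof (induction i)
    case (Suc i)
    with path have "(p i, p (Suc i)) \<in> \<theta> \<union> r"
      by simp
    with \<open>\<theta> \<union> r \<subseteq> A \<times> A\<close> show ?case
      by blast
  qed (use assms(3) in simp)
  have "(p (i - 1), p i) \<in> \<theta> \<or> (p (i - 1), p i) \<in> r \<and> p (i - 1) \<noteq> p i"
    if i: "i \<in> {1..n}" for i
  proof -
    obtain j where "i = Suc j" "j < n"
      using i by (cases i) auto
    with path have "(p (i - 1), p i) \<in> \<theta> \<union> r"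
      by simp
    \<comment> \<open>\<open>\<theta>\<close>-circles only allow strict order steps; a trivial step is a \<open>\<theta>\<close>-step by reflexivity\<close>
    moreover have "(p (i - 1), p i) \<in> \<theta>" if "p (i - 1) = p i"
      using that inA[of i] i assms(1) unfolding equiv_def refl_on_def by auto
    ultimately show ?thesis
      by blast
  qed
  with inA path show "theta_circle A r \<theta> p n"
    unfolding theta_circle_def by auto
qed

lemma path_rtrancl:
  assumes "\<forall>i<n. (p i, p (Suc i)) \<in> E" "j \<le> k" "k \<le> n"
  shows "(p j, p k) \<in> E\<^sup>*"
  using assms(2,3)
proof (induction k)
  case (Suc k)
  then show ?case
    using assms(1) by (cases "j = Suc k") (auto intro: rtrancl_into_rtrancl)
qed simp

lemma compatible_congruence_iff_rtrancl:
  assumes "equiv A \<theta>" "r \<subseteq> A \<times> A"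
  shows "compatible_congruence A r \<theta> \<longleftrightarrow> cycle_closed A r \<theta>"
proof
  assume compat: "compatible_congruence A r \<theta>"
  show "cycle_closed A r \<theta>"
    unfolding cycle_closed_def
  proof (intro ballI impI)
    fix a b assume "a \<in> A" "b \<in> A" "(a, b) \<in> (\<theta> \<union> r)\<^sup>* \<and> (b, a) \<in> (\<theta> \<union> r)\<^sup>*"
    then obtain p n k where "p 0 = a" "p n = a" "k \<le> n" "p k = b"
      and "\<forall>i<n. (p i, p (Suc i)) \<in> \<theta> \<union> r"
      using rtrancl_cycle_through[of a b "\<theta> \<union> r"] by blast
    then have "theta_circle A r \<theta> p n"
      using theta_circle_iff_path[where p = p, OF assms] \<open>a \<in> A\<close> by simp
    then show "(a, b) \<in> \<theta>"
      using compat \<open>k \<le> n\<close> \<open>p 0 = a\<close> \<open>p k = b\<close> unfolding compatible_congruence_def by blast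
  qed
next
  assume closed: "cycle_closed A r \<theta>"
  show "compatible_congruence A r \<theta>"
    unfolding compatible_congruence_def
  proof (intro allI impI)
    fix p n i assume circle: "theta_circle A r \<theta> p n" and "i \<le> n"
    then have "p 0 \<in> A" "p i \<in> A"
      unfolding theta_circle_def by auto
    moreover have path: "p n = p 0" "\<forall>i<n. (p i, p (Suc i)) \<in> \<theta> \<union> r"
      using circle theta_circle_iff_path[where p = p, OF assms \<open>p 0 \<in> A\<close>] by auto
    ultimately show "(p 0, p i) \<in> \<theta>"
      using closed[unfolded cycle_closed_def] path_rtrancl[OF path(2)] \<open>i \<le> n\<close> by (metis le0 order_refl)
  qed
qed

lemma quot_rel_class:
  assumes "equiv A \<theta>" "(x, y) \<in> r" "r \<subseteq> A \<times> A"
  shows "(\<theta> `` {x}, \<theta> `` {y}) \<in> quot_rel A r \<theta>"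
proof -
  have "x \<in> A" "y \<in> A"
    using assms(2,3) by blast+
  then have "x \<in> \<theta> `` {x}" "y \<in> \<theta> `` {y}" "\<theta> `` {x} \<in> A // \<theta>" "\<theta> `` {y} \<in> A // \<theta>"
    using equiv_class_self[OF assms(1)] quotientI by auto
  with assms(2) show ?thesis
    unfolding quot_rel_def by blast
qed

lemma quot_rel_subset: "quot_rel A r \<theta> \<subseteq> A // \<theta> \<times> A // \<theta>"
  unfolding quot_rel_def by blast

lemma preorder_on_quot_rel_trancl:
  assumes "equiv A \<theta>" "preorder_on A r"
  shows "preorder_on (A // \<theta>) ((quot_rel A r \<theta>)\<^sup>+)"
proof -
  have r: "r \<subseteq> A \<times> A" "refl_on A r"
    using assms(2) unfolding preorder_on_def by blast+
  have "(X, X) \<in> (quot_rel A r \<theta>)\<^sup>+" if X: "X \<in> A // \<theta>" for X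
  proof -
    obtain x where "x \<in> A" "X = \<theta> `` {x}"
      using X by (rule quotientE)
    then show ?thesis
      using quot_rel_class[OF assms(1) _ r(1), of x x] r(2) unfolding refl_on_def by blast
  qed
  moreover have "(quot_rel A r \<theta>)\<^sup>+ \<subseteq> A // \<theta> \<times> A // \<theta>"
    using quot_rel_subset by (rule trancl_subset_Sigma)
  ultimately show ?thesis
    unfolding preorder_on_def refl_on_def by simp
qed

lemma quot_rel_trancl_imp_rtrancl:
  assumes "equiv A \<theta>" "(X, Y) \<in> (quot_rel A r \<theta>)\<^sup>+" "x \<in> X" "y \<in> Y"
  shows "(x, y) \<in> (\<theta> \<union> r)\<^sup>*"
  using assms(2-4)
proof (induction arbitrary: y rule: trancl_induct)
  case (base Y)
  then obtain a b where "a \<in> X" "b \<in> Y" "(a, b) \<in> r" "X \<in> A // \<theta>" "Y \<in> A // \<theta>"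
    unfolding quot_rel_def by blast
  then have "(x, a) \<in> \<theta> \<union> r" "(a, b) \<in> \<theta> \<union> r" "(b, y) \<in> \<theta> \<union> r"
    using base assms(1) in_quotient_imp_in_rel by fast+
  then show ?case
    by (meson converse_rtrancl_into_rtrancl r_into_rtrancl)
next
  case (step Y Z)
  then obtain a b where "a \<in> Y" "b \<in> Z" "(a, b) \<in> r" "Z \<in> A // \<theta>"
    unfolding quot_rel_def by blast
  then have "(a, b) \<in> \<theta> \<union> r" "(b, y) \<in> \<theta> \<union> r"
    using step assms(1) in_quotient_imp_in_rel by fast+
  moreover have "(x, a) \<in> (\<theta> \<union> r)\<^sup>*"
    using step \<open>a \<in> Y\<close> by blast
  ultimately show ?case
    by (meson rtrancl_into_rtrancl)
qed

lemma rtrancl_imp_quot_rel_trancl: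
  assumes "equiv A \<theta>" "r \<subseteq> A \<times> A" "(a, b) \<in> (\<theta> \<union> r)\<^sup>*"
  shows "(\<theta> `` {a}, \<theta> `` {b}) \<in> ((quot_rel A r \<theta>)\<^sup>+)\<^sup>="
  using assms(3)
proof (induction rule: rtrancl_induct)
  case (step b c)
  from step(2) have "(\<theta> `` {b}, \<theta> `` {c}) \<in> ((quot_rel A r \<theta>)\<^sup>+)\<^sup>="
  proof
    assume "(b, c) \<in> \<theta>"
    then show ?thesis
      by (simp add: equiv_class_eq[OF assms(1)])
  next
    assume "(b, c) \<in> r"
    then show ?thesis
      using quot_rel_class[OF assms(1) _ assms(2)] by blast
  qed
  with step(3) show ?case
    using trancl_trans by fastforce
qed simp

lemma antisym_quot_rel_trancl_iff:
  assumes "equiv A \<theta>" "r \<subseteq> A \<times> A"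
  shows "antisym ((quot_rel A r \<theta>)\<^sup>+) \<longleftrightarrow> cycle_closed A r \<theta>"
proof
  assume anti: "antisym ((quot_rel A r \<theta>)\<^sup>+)"
  show "cycle_closed A r \<theta>"
    unfolding cycle_closed_def
  proof (intro ballI impI)
    fix a b assume "a \<in> A" "b \<in> A" and ab: "(a, b) \<in> (\<theta> \<union> r)\<^sup>* \<and> (b, a) \<in> (\<theta> \<union> r)\<^sup>*"
    then have "(\<theta> `` {a}, \<theta> `` {b}) \<in> ((quot_rel A r \<theta>)\<^sup>+)\<^sup>="
      and "(\<theta> `` {b}, \<theta> `` {a}) \<in> ((quot_rel A r \<theta>)\<^sup>+)\<^sup>="
      using rtrancl_imp_quot_rel_trancl[OF assms] by blast+
    then have "\<theta> `` {a} = \<theta> `` {b}"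
      using antisymD[OF anti] by blast
    then show "(a, b) \<in> \<theta>"
      using eq_equiv_class[OF _ assms(1) \<open>b \<in> A\<close>] by blast
  qed
next
  assume closed: "cycle_closed A r \<theta>"
  show "antisym ((quot_rel A r \<theta>)\<^sup>+)"
  proof (rule antisymI)
    fix X Y assume XY: "(X, Y) \<in> (quot_rel A r \<theta>)\<^sup>+" "(Y, X) \<in> (quot_rel A r \<theta>)\<^sup>+"
    have "(quot_rel A r \<theta>)\<^sup>+ \<subseteq> A // \<theta> \<times> A // \<theta>"
      using quot_rel_subset by (rule trancl_subset_Sigma)
    with XY(1) obtain x y where "x \<in> A" "X = \<theta> `` {x}" "y \<in> A" "Y = \<theta> `` {y}"
      by (blast elim: quotientE)
    moreover have "(x, y) \<in> \<theta>"
      using closed[unfolded cycle_closed_def] calculation quot_rel_trancl_imp_rtrancl[OF assms(1)] XY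
        equiv_class_self[OF assms(1)] by blast
    ultimately show "X = Y"
      using equiv_class_eq[OF assms(1)] by blast
  qed
qed

lemma natural_dcpo_congruence_iff_antisym:
  assumes "finite A" "partial_order_on A r" "equiv A \<theta>"
  shows "natural_dcpo_congruence A r \<theta> \<longleftrightarrow> antisym ((quot_rel A r \<theta>)\<^sup>+)"
proof
  assume "antisym ((quot_rel A r \<theta>)\<^sup>+)"
  then have po: "partial_order_on (A // \<theta>) ((quot_rel A r \<theta>)\<^sup>+)"
    using preorder_on_quot_rel_trancl assms(2,3) unfolding partial_order_on_def by blast
  have "finite (A // \<theta>)"
    using finite_quotient assms(1,3) equiv_type by blast
  then have "dcpo (A // \<theta>) ((quot_rel A r \<theta>)\<^sup>+)"
    using po by (rule finite_partial_order_dcpo)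
  moreover have "r \<subseteq> A \<times> A"
    using assms(2) unfolding partial_order_on_def preorder_on_def by blast
  then have "dcpo_map A r (A // \<theta>) ((quot_rel A r \<theta>)\<^sup>+) (\<lambda>p. \<theta> `` {p})"
    by (intro finite_monotone_dcpo_map[OF assms(1,2)])
       (use quotientI quot_rel_class[OF assms(3)] in auto)
  ultimately show "natural_dcpo_congruence A r \<theta>"
    unfolding natural_dcpo_congruence_def using po by blast
qed (simp add: natural_dcpo_congruence_def partial_order_on_def)

theorem mainTheorem13:
  fixes P :: "'a set" and le :: "('a \<times> 'a) set" and \<theta> :: "('a \<times> 'a) set"
  assumes "finite P" and "partial_order_on P le" and "equiv P \<theta>"
  shows "natural_dcpo_congruence P le \<theta> \<longleftrightarrow> compatible_congruence P le \<theta>"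
proof -
  have "le \<subseteq> P \<times> P"
    using assms(2) unfolding partial_order_on_def preorder_on_def by blast
  then show ?thesis
    using natural_dcpo_congruence_iff_antisym[OF assms]
      antisym_quot_rel_trancl_iff[OF assms(3)] compatible_congruence_iff_rtrancl[OF assms(3)]
    by simp
qed

end
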